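(* Let $n>1$ be an integer and $t\in\mathbb Z/(n)$ invertible. Let $j_0,\dots,j_{n-1}\in\mathbb Z/(n)$ (indices read in $\mathbb Z/(n)$) satisfy $j_i=j_{-i}$ and $j_{t^s i}=t^s j_i-(t^s-1)j_0$ for all $i\in\mathbb Z/(n)$ and all $s\in\mathbb Z$, and suppose that for every nonzero $i\in\mathbb Z/(n)$ there is $k\in\mathbb Z/(n)$ with $j_{i+k}-j_k$ invertible. Define $\sigma_{(i,j)}(k,l)=(tk+j,\ t(l-j_{tk+j-i}))$ on $(\mathbb Z/(n))^2$ and $r((i,j),(k,l))=(\sigma_{(i,j)}(k,l),\sigma^{-1}_{\sigma_{(i,j)}(k,l)}(i,j))$. Then $((\mathbb Z/(n))^2,r)$ is an indecomposable and irretractable solution of the YBE. If moreover (i) $j_0-j_i$ is invertible for every nonzero $i\in\mathbb Z/(n)$, and (ii) $j_i-j_k$ is invertible whenever $j_i\ne j_k$, then $((\mathbb Z/(n))^2,r)$ is a simple solution of the YBE.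
   Context: A solution of the YBE is a pair $(X,r)$, $X$ nonempty, $r:X\times X\to X\times X$, $r(x,y)=(\sigma_x(y),\gamma_y(x))$, with $r^2=\mathrm{id}$, all $\sigma_x,\gamma_x$ bijective, and $r_{12}r_{23}r_{12}=r_{23}r_{12}r_{23}$ on $X^3$. Indecomposable: $\langle\sigma_x\rangle\le \mathrm{Sym}_X$ transitive on $X$. Irretractable: $\sigma_x\ne\sigma_y$ for $x\ne y$. A homomorphism of solutions $f:(X,r)\to(Y,s)$ (with $s(t,z)=(\sigma'_t(z),\gamma'_z(t))$) is a map with $f(\sigma_x(y))=\sigma'_{f(x)}(f(y))$; $(X,r)$ is simple if $|X|>1$ and every surjective homomorphism of solutions $f:(X,r)\to(Y,s)$ is bijective or has $|Y|=1$. *)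

theory Defs
  imports "HOL-Number_Theory.Cong"
begin

definition sig :: "('a \<times> 'a \<Rightarrow> 'a \<times> 'a) \<Rightarrow> 'a \<Rightarrow> 'a \<Rightarrow> 'a" where
  "sig r x y = fst (r (x, y))"

definition gam :: "('a \<times> 'a \<Rightarrow> 'a \<times> 'a) \<Rightarrow> 'a \<Rightarrow> 'a \<Rightarrow> 'a" where
  "gam r y x = snd (r (x, y))"

definition r12 :: "('a \<times> 'a \<Rightarrow> 'a \<times> 'a) \<Rightarrow> 'a \<times> 'a \<times> 'a \<Rightarrow> 'a \<times> 'a \<times> 'a" where
  "r12 r v = (case v of (x, y, z) \<Rightarrow> (fst (r (x, y)), snd (r (x, y)), z))"

definition r23 :: "('a \<times> 'a \<Rightarrow> 'a \<times> 'a) \<Rightarrow> 'a \<times> 'a \<times> 'a \<Rightarrow> 'a \<times> 'a \<times> 'a" where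
  "r23 r v = (case v of (x, y, z) \<Rightarrow> (x, fst (r (y, z)), snd (r (y, z))))"

definition is_solution :: "'a set \<Rightarrow> ('a \<times> 'a \<Rightarrow> 'a \<times> 'a) \<Rightarrow> bool" where
  "is_solution X r \<longleftrightarrow>
     X \<noteq> {} \<and>
     (\<forall>x\<in>X. \<forall>y\<in>X. r (x, y) \<in> X \<times> X) \<and>
     (\<forall>x\<in>X. bij_betw (sig r x) X X) \<and>
     (\<forall>y\<in>X. bij_betw (gam r y) X X) \<and>
     (\<forall>x\<in>X. \<forall>y\<in>X. r (r (x, y)) = (x, y)) \<and>
     (\<forall>x\<in>X. \<forall>y\<in>X. \<forall>z\<in>X.
        r12 r (r23 r (r12 r (x, y, z))) = r23 r (r12 r (r23 r (x, y, z))))"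

text \<open>The permutation group generated by the sigma_x (as maps on X; values outside X irrelevant).\<close>
inductive_set sigma_group :: "'a set \<Rightarrow> ('a \<times> 'a \<Rightarrow> 'a \<times> 'a) \<Rightarrow> ('a \<Rightarrow> 'a) set"
  for X r where
  idI: "(\<lambda>z. z) \<in> sigma_group X r"
| sigI: "x \<in> X \<Longrightarrow> g \<in> sigma_group X r \<Longrightarrow> sig r x \<circ> g \<in> sigma_group X r"
| invI: "x \<in> X \<Longrightarrow> g \<in> sigma_group X r \<Longrightarrow> inv_into X (sig r x) \<circ> g \<in> sigma_group X r"

definition indecomposable :: "'a set \<Rightarrow> ('a \<times> 'a \<Rightarrow> 'a \<times> 'a) \<Rightarrow> bool" where
  "indecomposable X r \<longleftrightarrow> (\<forall>x\<in>X. \<forall>y\<in>X. \<exists>g\<in>sigma_group X r. g x = y)"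

definition irretractable :: "'a set \<Rightarrow> ('a \<times> 'a \<Rightarrow> 'a \<times> 'a) \<Rightarrow> bool" where
  "irretractable X r \<longleftrightarrow> (\<forall>x\<in>X. \<forall>y\<in>X. x \<noteq> y \<longrightarrow> (\<exists>z\<in>X. sig r x z \<noteq> sig r y z))"

definition is_hom :: "'a set \<Rightarrow> ('a \<times> 'a \<Rightarrow> 'a \<times> 'a) \<Rightarrow> 'b set \<Rightarrow> ('b \<times> 'b \<Rightarrow> 'b \<times> 'b)
     \<Rightarrow> ('a \<Rightarrow> 'b) \<Rightarrow> bool" where
  "is_hom X r Y s f \<longleftrightarrow> f ` X \<subseteq> Y \<and>
     (\<forall>x\<in>X. \<forall>y\<in>X. f (sig r x y) = sig s (f x) (f y))"

text \<open>Simplicity, with target solutions ranging over carriers in the type 'b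
  (used with a free type variable, i.e. universally quantified over all types).\<close>
definition is_simple :: "'a set \<Rightarrow> ('a \<times> 'a \<Rightarrow> 'a \<times> 'a) \<Rightarrow> 'b itself \<Rightarrow> bool" where
  "is_simple X r _ \<longleftrightarrow> card X > 1 \<and>
     (\<forall>(Y :: 'b set) s f. is_solution Y s \<and> is_hom X r Y s f \<and> f ` X = Y
        \<longrightarrow> bij_betw f X Y \<or> card Y = 1)"

section \<open>Z/(n) represented by the integers 0..n-1, arithmetic mod n\<close>

definition zpow_mod :: "int \<Rightarrow> int \<Rightarrow> int \<Rightarrow> int" where
  "zpow_mod n t s = (if 0 \<le> s then t ^ nat s
                     else (SOME u. [t * u = 1] (mod n)) ^ nat (- s))"

definition carrierZ2 :: "int \<Rightarrow> (int \<times> int) set" where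
  "carrierZ2 n = {0..<n} \<times> {0..<n}"

definition sigZ :: "int \<Rightarrow> int \<Rightarrow> (int \<Rightarrow> int) \<Rightarrow> int \<times> int \<Rightarrow> int \<times> int \<Rightarrow> int \<times> int" where
  "sigZ n t j p q = (case p of (i, a) \<Rightarrow> case q of (k, l) \<Rightarrow>
      ((t * k + a) mod n, (t * (l - j ((t * k + a - i) mod n))) mod n))"

definition rZ :: "int \<Rightarrow> int \<Rightarrow> (int \<Rightarrow> int) \<Rightarrow> (int \<times> int) \<times> (int \<times> int) \<Rightarrow> (int \<times> int) \<times> (int \<times> int)" where
  "rZ n t j pq = (case pq of (p, q) \<Rightarrow>
      (sigZ n t j p q, inv_into (carrierZ2 n) (sigZ n t j (sigZ n t j p q)) p))"

end

(* The maps sigma_(i,a) are affine bijections of (Z/(n))^2 and r is built from them in the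
   standard way, so the braid relation reduces to the identity
   sigma_x sigma_y = sigma_(sigma_x y) sigma_(sigma^-1_(sigma_x y) x), a computation modulo n
   that only uses j_(-i) = j_i and j_(t i) = t j_i - (t - 1) j_0.

   The map sigma_(0,b) carries any column {k} x Z/(n) onto any other, and
   sigma^-1_(i',a) sigma_(i,a) translates the column k by j_(tk+a-i') - j_(tk+a-i); the
   separation hypothesis makes such a translation a unit, which gives indecomposability and
   irretractability.

   For simplicity, let f be a homomorphism onto a solution with f x = f x' for x <> x'.
   Then f (sigma_x z) = f (sigma_x' z), and injectivity of the sigma-maps of the target gives
   f w = f w' whenever sigma_x w = sigma_x' w'. Transporting the identification in this way
   one obtains two identified points in one row, then a constant column, then constant
   columns, and finally a constant f. In the one case where no such pair is reached
   directly (x = (i,a), x' = (i',a') with a <> a', i <> i' and a - i, a' - i' incongruent, so n <> 2),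
   two transports applied to (0,0) in either order land in one column at heights differing
   by 2 (j_(a-a') - j_0), a unit by hypothesis (i). *)

theory Submission
  imports Defs
begin

section \<open>Solutions given by their sigma-maps\<close>

lemma ybe_from_sigma:
  fixes X :: "'a set" and \<sigma> :: "'a \<Rightarrow> 'a \<Rightarrow> 'a"
  assumes bij: "\<And>x. x \<in> X \<Longrightarrow> bij_betw (\<sigma> x) X X"
    and comp: "\<And>x y z. x \<in> X \<Longrightarrow> y \<in> X \<Longrightarrow> z \<in> X \<Longrightarrow>
             \<sigma> x (\<sigma> y z) = \<sigma> (\<sigma> x y) (\<sigma> (inv_into X (\<sigma> (\<sigma> x y)) x) z)"
    and r: "\<And>p q. r (p, q) = (\<sigma> p q, inv_into X (\<sigma> (\<sigma> p q)) p)"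
    and x: "x \<in> X" and y: "y \<in> X" and z: "z \<in> X"
  shows "r12 r (r23 r (r12 r (x, y, z))) = r23 r (r12 r (r23 r (x, y, z)))"
proof -
  have inX: "\<sigma> u v \<in> X" if "u \<in> X" "v \<in> X" for u v
    using bij[OF that(1)] that(2) by (auto simp: bij_betw_def)
  have invX: "inv_into X (\<sigma> u) v \<in> X" if "u \<in> X" "v \<in> X" for u v
    using bij[OF that(1)] that(2) by (metis bij_betw_def inv_into_into)
  have f_inv: "\<sigma> u (inv_into X (\<sigma> u) v) = v" if "u \<in> X" "v \<in> X" for u v
    using bij[OF that(1)] that(2) by (metis bij_betw_def f_inv_into_f)
  have inv_f: "inv_into X (\<sigma> u) (\<sigma> u v) = v" if "u \<in> X" "v \<in> X" for u v
    using bij[OF that(1)] that(2) by (metis bij_betw_def inv_into_f_f)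
  define a where "a = \<sigma> x y"
  define b where "b = inv_into X (\<sigma> a) x"
  define c where "c = \<sigma> b z"
  define d where "d = inv_into X (\<sigma> c) b"
  define e where "e = \<sigma> y z"
  define f where "f = inv_into X (\<sigma> e) y"
  define g where "g = \<sigma> x e"
  define h where "h = inv_into X (\<sigma> g) x"
  have aX: "a \<in> X" and bX: "b \<in> X" and cX: "c \<in> X" and dX: "d \<in> X"
    and eX: "e \<in> X" and fX: "f \<in> X" and gX: "g \<in> X" and hX: "h \<in> X"
    using x y z by (simp_all add: a_def b_def c_def d_def e_def f_def g_def h_def inX invX)
  have lhs: "r12 r (r23 r (r12 r (x, y, z))) = (\<sigma> a c, inv_into X (\<sigma> (\<sigma> a c)) a, d)"
    by (simp add: r12_def r23_def r a_def b_def c_def d_def)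
  have rhs: "r23 r (r12 r (r23 r (x, y, z))) = (g, \<sigma> h f, inv_into X (\<sigma> (\<sigma> h f)) h)"
    by (simp add: r12_def r23_def r e_def f_def g_def h_def)
  have first: "\<sigma> a c = g"
    using comp[OF x y z] by (simp add: a_def b_def c_def g_def e_def)
  have "\<sigma> g (\<sigma> h f) = \<sigma> x (\<sigma> e f)"
    using comp[OF x eX fX] by (simp add: g_def h_def)
  also have "\<dots> = a" by (simp add: f_def f_inv eX y a_def)
  finally have second: "inv_into X (\<sigma> g) a = \<sigma> h f"
    using inv_f[OF gX inX[OF hX fX]] by simp
  have "\<sigma> g (\<sigma> (\<sigma> h f) d) = \<sigma> a (\<sigma> c d)"
    using comp[OF aX cX dX] first second by simp
  also have "\<dots> = \<sigma> a b" by (simp add: d_def f_inv cX bX)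
  also have "\<dots> = x" by (simp add: b_def f_inv aX x)
  finally have "\<sigma> (\<sigma> h f) d = h"
    by (metis gX h_def inv_f inX hX fX dX)
  hence third: "inv_into X (\<sigma> (\<sigma> h f)) h = d"
    by (metis inv_f inX hX fX dX)
  show ?thesis using lhs rhs first second third by simp
qed

lemma is_solution_from_sigma:
  fixes X :: "'a set" and \<sigma> :: "'a \<Rightarrow> 'a \<Rightarrow> 'a"
  assumes nonempty: "X \<noteq> {}"
    and bij: "\<And>x. x \<in> X \<Longrightarrow> bij_betw (\<sigma> x) X X"
    and comp: "\<And>x y z. x \<in> X \<Longrightarrow> y \<in> X \<Longrightarrow> z \<in> X \<Longrightarrow>
             \<sigma> x (\<sigma> y z) = \<sigma> (\<sigma> x y) (\<sigma> (inv_into X (\<sigma> (\<sigma> x y)) x) z)"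
    and gam_bij: "\<And>y. y \<in> X \<Longrightarrow> bij_betw (\<lambda>x. inv_into X (\<sigma> (\<sigma> x y)) x) X X"
    and r: "\<And>p q. r (p, q) = (\<sigma> p q, inv_into X (\<sigma> (\<sigma> p q)) p)"
  shows "is_solution X r"
proof -
  have inX: "\<sigma> x y \<in> X" if "x \<in> X" "y \<in> X" for x y
    using bij[OF that(1)] that(2) by (auto simp: bij_betw_def)
  have invX: "inv_into X (\<sigma> x) y \<in> X" if "x \<in> X" "y \<in> X" for x y
    using bij[OF that(1)] that(2) by (metis bij_betw_def inv_into_into)
  have involutive: "r (r (x, y)) = (x, y)" if "x \<in> X" "y \<in> X" for x y
  proof -
    have "\<sigma> (\<sigma> x y) (inv_into X (\<sigma> (\<sigma> x y)) x) = x"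
      using bij_betw_inv_into_right[OF bij[OF inX[OF that]] that(1)] .
    moreover have "inv_into X (\<sigma> x) (\<sigma> x y) = y"
      using bij_betw_inv_into_left[OF bij[OF that(1)] that(2)] .
    ultimately show ?thesis by (simp add: r)
  qed
  have sig_r: "sig r = \<sigma>" and gam_r: "gam r = (\<lambda>y x. inv_into X (\<sigma> (\<sigma> x y)) x)"
    by (simp_all add: sig_def gam_def r fun_eq_iff)
  have r_in: "r (x, y) \<in> X \<times> X" if "x \<in> X" "y \<in> X" for x y
    using that by (simp add: r inX invX)
  show ?thesis
    unfolding is_solution_def sig_r gam_r
    by (intro conjI ballI)
      (rule nonempty r_in bij gam_bij involutive ybe_from_sigma[OF bij comp r]; assumption)+
qed

definition sigma_orbit :: "'a set \<Rightarrow> ('a \<times> 'a \<Rightarrow> 'a \<times> 'a) \<Rightarrow> 'a \<Rightarrow> 'a \<Rightarrow> bool" where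
  "sigma_orbit X r p q \<longleftrightarrow> (\<exists>g\<in>sigma_group X r. g p = q)"

lemma sigma_orbit_refl: "sigma_orbit X r p p"
  unfolding sigma_orbit_def by (rule bexI[OF _ sigma_group.idI]) simp

lemma sigma_orbit_sig:
  assumes "sigma_orbit X r p q" and x: "x \<in> X"
  shows "sigma_orbit X r p (sig r x q)"
proof -
  obtain g where g: "g \<in> sigma_group X r" "g p = q"
    using assms(1) unfolding sigma_orbit_def by blast
  show ?thesis
    unfolding sigma_orbit_def by (rule bexI[OF _ sigma_group.sigI[OF x g(1)]]) (simp add: g(2))
qed

lemma sigma_orbit_inv_sig:
  assumes "sigma_orbit X r p q" and x: "x \<in> X"
  shows "sigma_orbit X r p (inv_into X (sig r x) q)"
proof -
  obtain g where g: "g \<in> sigma_group X r" "g p = q"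
    using assms(1) unfolding sigma_orbit_def by blast
  show ?thesis
    unfolding sigma_orbit_def by (rule bexI[OF _ sigma_group.invI[OF x g(1)]]) (simp add: g(2))
qed

lemma indecomposableI:
  "(\<And>p q. p \<in> X \<Longrightarrow> q \<in> X \<Longrightarrow> sigma_orbit X r p q) \<Longrightarrow> indecomposable X r"
  unfolding indecomposable_def sigma_orbit_def by blast

context
  fixes X :: "'a set" and r and Y :: "'b set" and s and f
  assumes sol: "is_solution Y s" and hom: "is_hom X r Y s f"
begin

lemma hom_sig: "x \<in> X \<Longrightarrow> y \<in> X \<Longrightarrow> f (sig r x y) = sig s (f x) (f y)"
  using hom by (simp add: is_hom_def)

lemma hom_sig_cancel:
  assumes "x \<in> X" "w \<in> X" "w' \<in> X" "f (sig r x w) = f (sig r x w')"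
  shows "f w = f w'"
proof -
  have "f ` X \<subseteq> Y" using hom by (simp add: is_hom_def)
  then have "inj_on (sig s (f x)) Y" and "f w \<in> Y" "f w' \<in> Y"
    using sol assms(1-3) by (auto simp: is_solution_def bij_betw_def)
  then show ?thesis using assms by (simp add: hom_sig inj_on_def)
qed

lemma hom_eq_of_sig_eq:
  assumes "x \<in> X" "x' \<in> X" "z \<in> X" "w \<in> X" "f x = f x'" "sig r x z = sig r x' w"
  shows "f z = f w"
proof -
  have "f (sig r x' w) = sig s (f x) (f z)"
    using hom_sig[OF assms(1,3)] assms(6) by simp
  also have "\<dots> = f (sig r x' z)"
    using hom_sig[OF assms(2,3)] assms(5) by simp
  finally have "f (sig r x' w) = f (sig r x' z)" .
  then have "f w = f z" by (rule hom_sig_cancel[OF assms(2,4,3)])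
  then show ?thesis by simp
qed

lemma hom_eq_transfer:
  assumes "x \<in> X" "x' \<in> X" "z \<in> X" "w \<in> X" "z' \<in> X" "w' \<in> X"
    and "sig r x z = sig r x' z'" "sig r x w = sig r x' w'" "f z = f w"
  shows "f z' = f w'"
proof -
  have "f (sig r x' z') = sig s (f x) (f z)"
    using hom_sig[OF assms(1,3)] assms(7) by simp
  also have "\<dots> = f (sig r x' w')"
    using hom_sig[OF assms(1,4)] assms(8,9) by simp
  finally have "f (sig r x' z') = f (sig r x' w')" .
  then show ?thesis by (rule hom_sig_cancel[OF assms(2,5,6)])
qed

end

lemma is_simpleI:
  assumes card: "card X > 1"
    and collapse: "\<And>(Y :: 'b set) s f x x'. is_solution Y s \<Longrightarrow> is_hom X r Y s f \<Longrightarrow>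
      x \<in> X \<Longrightarrow> x' \<in> X \<Longrightarrow> x \<noteq> x' \<Longrightarrow> f x = f x' \<Longrightarrow> \<forall>z\<in>X. \<forall>z'\<in>X. f z = f z'"
  shows "is_simple X r TYPE('b)"
  unfolding is_simple_def
proof (intro conjI card allI impI)
  fix Y :: "'b set" and s f
  assume "is_solution Y s \<and> is_hom X r Y s f \<and> f ` X = Y"
  then have sol: "is_solution Y s" and hom: "is_hom X r Y s f" and onto: "f ` X = Y"
    by simp_all
  show "bij_betw f X Y \<or> card Y = 1"
  proof (cases "inj_on f X")
    case True
    then show ?thesis using onto by (simp add: bij_betw_def)
  next
    case False
    then obtain x x' where x: "x \<in> X" and x': "x' \<in> X" "x \<noteq> x'" "f x = f x'"
      by (auto simp: inj_on_def)
    then have const: "\<forall>z\<in>X. f z = f x" using collapse[OF sol hom x x'] x by blast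
    have "f ` X = {f x}"
    proof
      show "f ` X \<subseteq> {f x}" using const by blast
      show "{f x} \<subseteq> f ` X" using x by blast
    qed
    then show ?thesis using onto by simp
  qed
qed

lemma mod_unit_step_induct:
  fixes n c l l' :: int
  assumes unit: "coprime c n" and n: "n > 0"
    and base: "P l" "0 \<le> l" "l < n"
    and step: "\<And>l. 0 \<le> l \<Longrightarrow> l < n \<Longrightarrow> P l \<Longrightarrow> P ((l + c) mod n)"
    and l': "0 \<le> l'" "l' < n"
  shows "P l'"
proof -
  have iter: "P ((l + int N * c) mod n)" for N :: nat
  proof (induction N)
    case 0
    show ?case using base by simp
  next
    case (Suc N)
    have "P (((l + int N * c) mod n + c) mod n)"
      using step[OF _ _ Suc] n by simp
    moreover have "l + int (Suc N) * c = l + int N * c + c" by (simp add: algebra_simps)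
    ultimately show ?case by (metis mod_add_left_eq)
  qed
  obtain u where u: "[c * u = 1] (mod n)" using cong_solve_coprime_int[OF unit] by blast
  define N where "N = nat ((u * (l' - l)) mod n)"
  have "int N = (u * (l' - l)) mod n" using n by (simp add: N_def)
  then have "[l + int N * c = l + (u * (l' - l)) * c] (mod n)"
    by (intro cong_add cong_refl cong_mult) (simp add: cong_def)
  also have "l + (u * (l' - l)) * c = l + (c * u) * (l' - l)" by (simp add: algebra_simps)
  also have "[l + (c * u) * (l' - l) = l + 1 * (l' - l)] (mod n)"
    by (intro cong_add cong_mult u cong_refl)
  finally have "(l + int N * c) mod n = l'" using l' by (simp add: cong_def)
  then show ?thesis using iter[of N] by simp
qed

section \<open>The solution on pairs of residues modulo n\<close>

locale zn_solution =
  fixes n t :: int and j :: "int \<Rightarrow> int"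
  assumes n_gt_1: "n > 1" and t_coprime: "coprime t n"
    and j_sym: "\<And>i. [j ((- i) mod n) = j (i mod n)] (mod n)"
    and j_mult_t: "\<And>i. [j ((t * i) mod n) = t * j (i mod n) - (t - 1) * j 0] (mod n)"
    and j_sep: "\<And>i. i mod n \<noteq> 0 \<Longrightarrow> \<exists>k. coprime (j ((i + k) mod n) - j (k mod n)) n"
begin

definition J :: "int \<Rightarrow> int" where "J x = j (x mod n)"

abbreviation X where "X \<equiv> carrierZ2 n"
abbreviation \<sigma> where "\<sigma> \<equiv> sigZ n t j"

lemma J_cong: "[x = y] (mod n) \<Longrightarrow> J x = J y"
  by (simp add: J_def cong_def)

lemma J_uminus: "[J (- x) = J x] (mod n)"
  using j_sym by (simp add: J_def)

lemma J_mult_t: "[J (t * x) = t * J x - (t - 1) * J 0] (mod n)"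
  using j_mult_t[of x] by (simp add: J_def)

lemma J_sep: "x mod n \<noteq> 0 \<Longrightarrow> \<exists>k. coprime (J (x + k) - J k) n"
  using j_sep by (simp add: J_def)

lemma sigZ_eq: "\<sigma> (i, a) (k, l) = ((t * k + a) mod n, (t * (l - J (t * k + a - i))) mod n)"
  by (simp add: sigZ_def J_def)

lemma sig_rZ: "sig (rZ n t j) = \<sigma>"
  by (simp add: sig_def rZ_def fun_eq_iff)

lemma mem_carrier: "(a, b) \<in> X \<longleftrightarrow> 0 \<le> a \<and> a < n \<and> 0 \<le> b \<and> b < n"
  by (auto simp: carrierZ2_def)

lemma n_pos: "n > 0"
  using n_gt_1 by simp

lemma mod_bounds [simp]: "0 \<le> x mod n" "x mod n < n"
  using n_pos by auto

lemma origin_in_carrier [simp]: "(0, 0) \<in> X"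
  using n_pos by (simp add: mem_carrier)

lemma sigZ_in: "\<sigma> x y \<in> X"
  by (cases x; cases y) (simp add: sigZ_eq mem_carrier)

lemma eq_of_cong: "[a = b] (mod n) \<Longrightarrow> 0 \<le> a \<Longrightarrow> a < n \<Longrightarrow> 0 \<le> b \<Longrightarrow> b < n \<Longrightarrow> a = b"
  by (simp add: cong_def)

lemma not_cong_of_coprime_diff:
  assumes "coprime (b - a) n" shows "\<not> [a = b] (mod n)"
proof
  assume "[a = b] (mod n)"
  then have "[b = a] (mod n)" by (rule cong_sym)
  then have "n dvd b - a" by (simp only: cong_iff_dvd_diff)
  then have "is_unit n" using coprime_common_divisor[OF assms _ dvd_refl] by blast
  then show False using n_gt_1 by simp
qed

lemma t_cancel: "[t * a = t * b] (mod n) \<longleftrightarrow> [a = b] (mod n)"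
  using t_coprime by (rule cong_mult_lcancel)

lemma t_solve: "\<exists>k. 0 \<le> k \<and> k < n \<and> [t * k = c] (mod n)"
proof -
  obtain u where u: "[t * u = 1] (mod n)" using cong_solve_coprime_int[OF t_coprime] by blast
  have "[t * ((u * c) mod n) = t * (u * c)] (mod n)"
    by (intro cong_mult cong_refl) (simp only: cong_mod_left cong_refl)
  also have "t * (u * c) = (t * u) * c" by (simp only: mult.assoc)
  also have "[(t * u) * c = 1 * c] (mod n)" using u by (rule cong_scalar_right)
  finally have "[t * ((u * c) mod n) = c] (mod n)" by (simp only: mult_1)
  then show ?thesis using mod_bounds[of "u * c"] by (intro exI[of _ "(u * c) mod n"] conjI)
qed

lemma cong_mod_self: "[a mod n = a] (mod n)"
  by simp

lemmas cong_arith_intros = cong_add cong_diff cong_mult cong_refl cong_mod_self cong_uminus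

lemma pair_mod_eq: "[a = c] (mod n) \<Longrightarrow> [b = d] (mod n) \<Longrightarrow> (a mod n, b mod n) = (c mod n, d mod n)"
  by (simp add: cong_def)

lemma sigZ_inj: "inj_on (\<sigma> x) X"
proof (rule inj_onI)
  fix y y' assume y: "y \<in> X" and y': "y' \<in> X" and eq: "\<sigma> x y = \<sigma> x y'"
  obtain i a where x: "x = (i, a)" by (cases x)
  obtain k l where yy: "y = (k, l)" by (cases y)
  obtain k' l' where yy': "y' = (k', l')" by (cases y')
  from eq have e1: "[t * k + a = t * k' + a] (mod n)"
    and e2: "[t * (l - J (t * k + a - i)) = t * (l' - J (t * k' + a - i))] (mod n)"
    by (simp_all add: x yy yy' sigZ_eq cong_def)
  from e1 have "[t * k = t * k'] (mod n)" by (simp only: cong_add_rcancel)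
  then have "[k = k'] (mod n)" by (simp only: t_cancel)
  then have "k = k'" using y y' by (simp add: yy yy' mem_carrier eq_of_cong)
  with e2 have ld: "[l - J (t * k + a - i) = l' - J (t * k + a - i)] (mod n)"
    by (simp only: t_cancel)
  have "[l = l'] (mod n)"
    using cong_add[OF ld cong_refl[of "J (t * k + a - i)"]] by simp
  then have "l = l'" using y y' by (simp add: yy yy' mem_carrier eq_of_cong)
  with \<open>k = k'\<close> show "y = y'" by (simp add: yy yy')
qed

lemma finite_carrier: "finite X"
  by (simp add: carrierZ2_def)

lemma sigZ_bij: "bij_betw (\<sigma> x) X X"
proof -
  have "\<sigma> x ` X \<subseteq> X" by (simp add: image_subset_iff sigZ_in)
  then have "\<sigma> x ` X = X" by (rule endo_inj_surj[OF finite_carrier _ sigZ_inj])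
  then show ?thesis using sigZ_inj by (simp add: bij_betw_def)
qed

lemma sigZ_inv_in: "y \<in> X \<Longrightarrow> inv_into X (\<sigma> x) y \<in> X"
  using sigZ_bij[of x] by (metis bij_betw_def inv_into_into)

lemma sigZ_inv_right: "y \<in> X \<Longrightarrow> \<sigma> x (inv_into X (\<sigma> x) y) = y"
  using sigZ_bij[of x] by (rule bij_betw_inv_into_right)

lemma sigZ_inv_left: "y \<in> X \<Longrightarrow> inv_into X (\<sigma> x) (\<sigma> x y) = y"
  using sigZ_bij[of x] by (rule bij_betw_inv_into_left)

lemma sigZ_return_coords:
  assumes x: "(i, a) \<in> X" and ret: "\<sigma> (\<sigma> (i, a) (k, l)) (p, q) = (i, a)"
  shows "[t * p + t * (l - J (t * k + a - i)) = i] (mod n)"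
    and "[t * q - t * J (t * k + a - i) = a] (mod n)"
proof -
  let ?w = "t * k + a - i"
  define u where "u = (t * k + a) mod n"
  define v where "v = (t * (l - J ?w)) mod n"
  have "\<sigma> (i, a) (k, l) = (u, v)" by (simp add: sigZ_eq u_def v_def)
  with ret have "\<sigma> (u, v) (p, q) = (i, a)" by simp
  then have "(t * p + v) mod n = i" and "(t * (q - J (t * p + v - u))) mod n = a"
    by (simp_all add: sigZ_eq)
  then have h1: "[t * p + v = i] (mod n)" and h2: "[t * (q - J (t * p + v - u)) = a] (mod n)"
    using x by (simp_all add: cong_def mem_carrier)
  have "[t * p + v - u = i - (t * k + a)] (mod n)"
    unfolding u_def by (intro cong_diff h1 cong_mod_self)
  also have "i - (t * k + a) = - ?w" by simp
  finally have Jw: "J (t * p + v - u) = J (- ?w)" by (rule J_cong)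
  have "[t * q - t * J ?w = t * (q - J (- ?w))] (mod n)"
    unfolding right_diff_distrib[symmetric]
    by (intro cong_mult cong_diff cong_refl cong_sym[OF J_uminus])
  also have "[t * (q - J (- ?w)) = a] (mod n)" using h2 unfolding Jw .
  finally show "[t * q - t * J ?w = a] (mod n)" .
  have "[t * p + t * (l - J ?w) = t * p + v] (mod n)"
    unfolding v_def by (intro cong_add cong_refl cong_sym[OF cong_mod_self])
  also note h1
  finally show "[t * p + t * (l - J ?w) = i] (mod n)" .
qed

lemma sigZ_mod_right: "\<sigma> x (k mod n, l mod n) = \<sigma> x (k, l)"
proof -
  obtain i a where x: "x = (i, a)" by (cases x)
  have "[t * (k mod n) + a - i = t * k + a - i] (mod n)" by (intro cong_arith_intros)
  then have "J (t * (k mod n) + a - i) = J (t * k + a - i)" by (rule J_cong)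
  then show ?thesis unfolding x sigZ_eq by (intro pair_mod_eq cong_arith_intros) simp
qed

lemma sigZ_mod_left: "\<sigma> (i mod n, a mod n) y = \<sigma> (i, a) y"
proof -
  obtain k l where y: "y = (k, l)" by (cases y)
  have "[t * k + a mod n - i mod n = t * k + a - i] (mod n)" by (intro cong_arith_intros)
  then have "J (t * k + a mod n - i mod n) = J (t * k + a - i)" by (rule J_cong)
  then show ?thesis unfolding y sigZ_eq by (intro pair_mod_eq cong_arith_intros) simp
qed

lemma sigZ_comp_congs:
  assumes hp: "[t * p + t * (y2 - v) = x1] (mod n)" and hq: "[t * q - t * v = x2] (mod n)"
  shows "[t * (t * k + q) + t * (y2 - v) = t * (t * k + y2) + x2] (mod n)"
    and "[t * (t * k + q) + t * (y2 - v) - (t * y1 + x2) = t * (t * k + y2 - y1)] (mod n)"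
    and "[t * (t * k + q - p) = t * (t * k + y2) + x2 - x1] (mod n)"
proof -
  have dq: "n dvd t * q - t * v - x2" using hq by (simp only: cong_iff_dvd_diff)
  have dp: "n dvd t * p + t * (y2 - v) - x1" using hp by (simp only: cong_iff_dvd_diff)
  have "t * (t * k + q) + t * (y2 - v) - (t * (t * k + y2) + x2) = t * q - t * v - x2"
    by (simp add: algebra_simps)
  with dq show "[t * (t * k + q) + t * (y2 - v) = t * (t * k + y2) + x2] (mod n)"
    by (simp only: cong_iff_dvd_diff)
  have "t * (t * k + q) + t * (y2 - v) - (t * y1 + x2) - t * (t * k + y2 - y1) = t * q - t * v - x2"
    by (simp add: algebra_simps)
  with dq show "[t * (t * k + q) + t * (y2 - v) - (t * y1 + x2) = t * (t * k + y2 - y1)] (mod n)"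
    by (simp only: cong_iff_dvd_diff)
  have "t * (t * k + q - p) - (t * (t * k + y2) + x2 - x1)
      = (t * q - t * v - x2) - (t * p + t * (y2 - v) - x1)"
    by (simp add: algebra_simps)
  with dq dp show "[t * (t * k + q - p) = t * (t * k + y2) + x2 - x1] (mod n)"
    by (simp only: cong_iff_dvd_diff dvd_diff)
qed

lemma sigZ_comp:
  assumes x: "x \<in> X" and ret: "\<sigma> (\<sigma> x y) y' = x"
  shows "\<sigma> x (\<sigma> y z) = \<sigma> (\<sigma> x y) (\<sigma> y' z)"
proof -
  obtain x1 x2 where xx: "x = (x1, x2)" by (cases x)
  obtain y1 y2 where yy: "y = (y1, y2)" by (cases y)
  obtain p q where yy': "y' = (p, q)" by (cases y')
  obtain k l where zz: "z = (k, l)" by (cases z)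
  let ?v = "J (t * y1 + x2 - x1)"
  have "\<sigma> (\<sigma> (x1, x2) (y1, y2)) (p, q) = (x1, x2)" using ret by (simp add: xx yy yy')
  note congs = sigZ_comp_congs[OF sigZ_return_coords[OF x[unfolded xx] this], of k]
  have J1: "J (t * (t * k + y2) + x2 - x1) = J (t * (t * k + q - p))"
    by (rule J_cong[OF cong_sym[OF congs(3)]])
  have J2: "J (t * (t * k + q) + t * (y2 - ?v) - (t * y1 + x2)) = J (t * (t * k + y2 - y1))"
    by (rule J_cong[OF congs(2)])
  have "\<sigma> y z = ((t * k + y2) mod n, (t * (l - J (t * k + y2 - y1))) mod n)"
    by (simp only: yy zz sigZ_eq)
  then have "\<sigma> x (\<sigma> y z) = \<sigma> (x1, x2) (t * k + y2, t * (l - J (t * k + y2 - y1)))"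
    by (simp only: xx sigZ_mod_right)
  also have "\<dots> = ((t * (t * k + y2) + x2) mod n,
      (t * (t * (l - J (t * k + y2 - y1)) - J (t * (t * k + q - p)))) mod n)"
    by (simp only: sigZ_eq J1)
  also have "\<dots> = ((t * (t * k + q) + t * (y2 - ?v)) mod n,
      (t * (t * (l - J (t * k + q - p)) - J (t * (t * k + y2 - y1)))) mod n)"
  proof (rule pair_mod_eq[OF cong_sym[OF congs(1)]])
    have "[t * (t * (l - J (t * k + y2 - y1)) - J (t * (t * k + q - p)))
        = t * (t * (l - J (t * k + y2 - y1)) - (t * J (t * k + q - p) - (t - 1) * J 0))] (mod n)"
      by (intro cong_mult cong_diff cong_refl J_mult_t)
    also have "t * (t * (l - J (t * k + y2 - y1)) - (t * J (t * k + q - p) - (t - 1) * J 0))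
        = t * (t * (l - J (t * k + q - p)) - (t * J (t * k + y2 - y1) - (t - 1) * J 0))"
      by (simp add: algebra_simps)
    also have "[t * (t * (l - J (t * k + q - p)) - (t * J (t * k + y2 - y1) - (t - 1) * J 0))
        = t * (t * (l - J (t * k + q - p)) - J (t * (t * k + y2 - y1)))] (mod n)"
      by (intro cong_mult cong_diff cong_refl cong_sym[OF J_mult_t])
    finally show "[t * (t * (l - J (t * k + y2 - y1)) - J (t * (t * k + q - p)))
        = t * (t * (l - J (t * k + q - p)) - J (t * (t * k + y2 - y1)))] (mod n)" .
  qed
  also have "\<dots> = \<sigma> (t * y1 + x2, t * (y2 - ?v)) (t * k + q, t * (l - J (t * k + q - p)))"
    by (simp only: sigZ_eq J2)
  also have "\<dots> = \<sigma> (\<sigma> x y) (\<sigma> y' z)"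
  proof -
    have "\<sigma> x y = ((t * y1 + x2) mod n, (t * (y2 - ?v)) mod n)" by (simp only: xx yy sigZ_eq)
    moreover have "\<sigma> y' z = ((t * k + q) mod n, (t * (l - J (t * k + q - p))) mod n)"
      by (simp only: yy' zz sigZ_eq)
    ultimately show ?thesis by (simp only: sigZ_mod_left sigZ_mod_right)
  qed
  finally show ?thesis .
qed

lemma sigZ_return_inj:
  assumes x: "x \<in> X" and x': "x' \<in> X"
    and ret: "\<sigma> (\<sigma> x y) w = x" and ret': "\<sigma> (\<sigma> x' y) w = x'"
  shows "x = x'"
proof -
  obtain k l where yy: "y = (k, l)" by (cases y)
  obtain p q where ww: "w = (p, q)" by (cases w)
  let ?V = "t * k + t * q - t * p - t * l"
  have explicit: "z = ((t * p + t * l - t * J ?V) mod n, (t * q - t * J ?V) mod n)"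
    if z: "z \<in> X" and retz: "\<sigma> (\<sigma> z y) w = z" for z
  proof -
    obtain i a where zz: "z = (i, a)" by (cases z)
    have "\<sigma> (\<sigma> (i, a) (k, l)) (p, q) = (i, a)" using retz by (simp add: zz yy ww)
    note returns = sigZ_return_coords[OF z[unfolded zz] this]
    let ?W = "t * k + a - i"
    have ha: "[a = t * q - t * J ?W] (mod n)" using returns(2) by (rule cong_sym)
    have hi: "[i = t * p + t * l - t * J ?W] (mod n)"
      using cong_sym[OF returns(1)] by (simp add: algebra_simps)
    have "[?W = t * k + (t * q - t * J ?W) - (t * p + t * l - t * J ?W)] (mod n)"
      by (intro cong_diff cong_add cong_refl ha hi)
    then have "[?W = ?V] (mod n)" by (simp add: algebra_simps)
    then have "J ?W = J ?V" by (rule J_cong)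
    moreover have "i mod n = i" "a mod n = a" using z by (simp_all add: zz mem_carrier)
    ultimately show ?thesis using ha hi by (simp add: zz cong_def)
  qed
  show ?thesis using explicit[OF x ret] explicit[OF x' ret'] by simp
qed

lemma gamZ_bij: "y \<in> X \<Longrightarrow> bij_betw (\<lambda>x. inv_into X (\<sigma> (\<sigma> x y)) x) X X"
proof -
  let ?g = "\<lambda>x. inv_into X (\<sigma> (\<sigma> x y)) x"
  have maps: "?g ` X \<subseteq> X" by (auto intro: sigZ_inv_in)
  have "inj_on ?g X"
  proof (rule inj_onI)
    fix x x' assume x: "x \<in> X" and x': "x' \<in> X" and eq: "?g x = ?g x'"
    show "x = x'"
    proof (rule sigZ_return_inj[OF x x'])
      show "\<sigma> (\<sigma> x y) (?g x) = x" by (rule sigZ_inv_right[OF x])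
      show "\<sigma> (\<sigma> x' y) (?g x) = x'" unfolding eq by (rule sigZ_inv_right[OF x'])
    qed
  qed
  with endo_inj_surj[OF finite_carrier maps] show ?thesis by (simp add: bij_betw_def)
qed

lemma rZ_is_solution: "is_solution X (rZ n t j)"
proof (rule is_solution_from_sigma[where \<sigma> = \<sigma>])
  show "X \<noteq> {}" using origin_in_carrier by blast
  show "\<And>p q. rZ n t j (p, q) = (\<sigma> p q, inv_into X (\<sigma> (\<sigma> p q)) p)" by (simp add: rZ_def)
  fix x y z assume x: "x \<in> X" and y: "y \<in> X" and z: "z \<in> X"
  show "\<sigma> x (\<sigma> y z) = \<sigma> (\<sigma> x y) (\<sigma> (inv_into X (\<sigma> (\<sigma> x y)) x) z)"
    by (rule sigZ_comp[OF x sigZ_inv_right[OF x]])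
qed (simp_all add: sigZ_bij gamZ_bij)

subsection \<open>Indecomposability and irretractability\<close>

definition row_shift :: "int \<Rightarrow> int \<Rightarrow> int \<Rightarrow> int \<times> int \<Rightarrow> int \<times> int" where
  "row_shift a i i' z = (fst z, (snd z - J (t * fst z + a - i) + J (t * fst z + a - i')) mod n)"

lemma row_shift_in: "z \<in> X \<Longrightarrow> row_shift a i i' z \<in> X"
  by (cases z) (simp add: row_shift_def mem_carrier)

lemma sigZ_row_shift: "\<sigma> (i', a) (row_shift a i i' z) = \<sigma> (i, a) z"
proof -
  obtain k l where z: "z = (k, l)" by (cases z)
  let ?L = "l - J (t * k + a - i) + J (t * k + a - i')"
  have "[t * (?L mod n - J (t * k + a - i')) = t * (l - J (t * k + a - i))] (mod n)"
    by (rule cong_trans[OF cong_mult[OF cong_refl cong_diff[OF cong_mod_self cong_refl]]]) simp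
  then show ?thesis by (simp add: z row_shift_def sigZ_eq cong_def)
qed

lemma sigZ_translate:
  assumes "[t * \<delta> = a - a'] (mod n)"
  shows "\<sigma> (i, a') ((k + \<delta>) mod n, l) = \<sigma> (i, a) (k, l)"
proof -
  have "[t * ((k + \<delta>) mod n) + a' = t * k + t * \<delta> + a'] (mod n)"
    by (rule cong_trans[OF cong_add[OF cong_mult[OF cong_refl cong_mod_self] cong_refl]])
      (simp add: algebra_simps)
  also have "[t * k + t * \<delta> + a' = t * k + (a - a') + a'] (mod n)"
    by (intro cong_add cong_refl assms)
  finally have first: "[t * ((k + \<delta>) mod n) + a' = t * k + a] (mod n)" by simp
  then have "J (t * ((k + \<delta>) mod n) + a' - i) = J (t * k + a - i)"
    by (intro J_cong cong_diff cong_refl)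
  with first show ?thesis by (simp add: sigZ_eq cong_def)
qed

lemma orbit_row_shift:
  assumes orb: "sigma_orbit X (rZ n t j) p z" and z: "z \<in> X"
    and ia: "(i, a) \<in> X" and i'a: "(i', a) \<in> X"
  shows "sigma_orbit X (rZ n t j) p (row_shift a i i' z)"
proof -
  have "inv_into X (\<sigma> (i', a)) (\<sigma> (i', a) (row_shift a i i' z)) = row_shift a i i' z"
    using row_shift_in[OF z] by (rule sigZ_inv_left)
  then have "inv_into X (\<sigma> (i', a)) (\<sigma> (i, a) z) = row_shift a i i' z"
    by (simp only: sigZ_row_shift)
  with sigma_orbit_inv_sig[OF sigma_orbit_sig[OF orb ia] i'a, unfolded sig_rZ] show ?thesis
    by simp
qed

lemma exists_separating_row:
  obtains i i' where "(i, 0) \<in> X" "(i', 0) \<in> X" "coprime (J (t * k + 0 - i') - J (t * k + 0 - i)) n"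
proof -
  obtain m where m: "coprime (J (1 + m) - J m) n" using J_sep[of 1] n_gt_1 by auto
  define i where "i = (t * k - m) mod n"
  define i' where "i' = (t * k - m - 1) mod n"
  have "J (t * k + 0 - i) = J m"
    by (rule J_cong) (simp add: i_def cong_def mod_simps)
  moreover have "J (t * k + 0 - i') = J (1 + m)"
    by (rule J_cong) (simp add: i'_def cong_def mod_simps add.commute)
  moreover have "(i, 0) \<in> X" "(i', 0) \<in> X" by (simp_all add: mem_carrier i_def i'_def n_pos)
  ultimately show ?thesis using that m by simp
qed

lemma orbit_column:
  assumes orb: "sigma_orbit X (rZ n t j) p (k, l)" and kl: "(k, l) \<in> X"
    and l': "0 \<le> l'" "l' < n"
  shows "sigma_orbit X (rZ n t j) p (k, l')"
proof -
  obtain i i' where i: "(i, 0) \<in> X" and i': "(i', 0) \<in> X"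
    and unit: "coprime (J (t * k + 0 - i') - J (t * k + 0 - i)) n"
    by (rule exists_separating_row)
  show ?thesis
  proof (rule mod_unit_step_induct[OF unit n_pos, where P = "\<lambda>l. sigma_orbit X (rZ n t j) p (k, l)"
        and l = l, OF orb _ _ _ l'])
    show "0 \<le> l" "l < n" using kl by (simp_all add: mem_carrier)
    fix l0 assume "0 \<le> l0" "l0 < n" and "sigma_orbit X (rZ n t j) p (k, l0)"
    then have "sigma_orbit X (rZ n t j) p (row_shift 0 i i' (k, l0))"
      using kl i i' by (intro orbit_row_shift) (simp_all add: mem_carrier)
    then show "sigma_orbit X (rZ n t j) p (k, (l0 + (J (t * k + 0 - i') - J (t * k + 0 - i))) mod n)"
      by (simp add: row_shift_def algebra_simps)
  qed
qed

lemma sigZ_column_onto: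
  assumes "(k, l) \<in> X"
  obtains m where "0 \<le> m" "m < n" "\<sigma> (0, (k - t * k0) mod n) (k0, m) = (k, l)"
proof -
  let ?J = "J (t * k0 + (k - t * k0) mod n)"
  obtain m where m: "0 \<le> m" "m < n" "[t * m = l + t * ?J] (mod n)" using t_solve by blast
  have "(t * k0 + (k - t * k0) mod n) mod n = (t * k0 + (k - t * k0)) mod n"
    by (simp only: mod_add_right_eq)
  then have first: "(t * k0 + (k - t * k0) mod n) mod n = k" using assms by (simp add: mem_carrier)
  have "t * (m - ?J) = t * m - t * ?J" by (simp add: algebra_simps)
  also have "[t * m - t * ?J = (l + t * ?J) - t * ?J] (mod n)" by (intro cong_diff m(3) cong_refl)
  finally have "(t * (m - ?J)) mod n = l" using assms by (simp add: mem_carrier cong_def)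
  with first have "\<sigma> (0, (k - t * k0) mod n) (k0, m) = (k, l)" by (simp add: sigZ_eq)
  with m(1,2) show ?thesis by (rule that)
qed

lemma sigma_orbit_carrier:
  assumes p: "p \<in> X" and q: "q \<in> X"
  shows "sigma_orbit X (rZ n t j) p q"
proof -
  obtain k l where pp: "p = (k, l)" by (cases p)
  obtain k' l' where qq: "q = (k', l')" by (cases q)
  obtain m where m: "0 \<le> m" "m < n" "\<sigma> (0, (k' - t * k) mod n) (k, m) = (k', l')"
    using sigZ_column_onto q[unfolded qq] by blast
  have "sigma_orbit X (rZ n t j) p (k, l)" using sigma_orbit_refl[of X "rZ n t j" p] by (simp only: pp)
  then have "sigma_orbit X (rZ n t j) p (k, m)" by (rule orbit_column[OF _ p[unfolded pp] m(1,2)])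
  then have "sigma_orbit X (rZ n t j) p (\<sigma> (0, (k' - t * k) mod n) (k, m))"
    by (rule sigma_orbit_sig[where r = "rZ n t j", unfolded sig_rZ]) (simp add: mem_carrier n_pos)
  then show ?thesis by (simp only: m(3) qq)
qed

lemma rZ_indecomposable: "indecomposable X (rZ n t j)"
  by (rule indecomposableI) (rule sigma_orbit_carrier)

lemma exists_separating_column:
  assumes i: "0 \<le> i" "i < n" and i': "0 \<le> i'" "i' < n" and ne: "i \<noteq> i'"
  obtains k where "0 \<le> k" "k < n" "coprime (J (t * k + a - i') - J (t * k + a - i)) n"
proof -
  have "\<not> [i = i'] (mod n)" using eq_of_cong i i' ne by blast
  then have "(i - i') mod n \<noteq> 0" by (simp add: cong_iff_dvd_diff dvd_eq_mod_eq_0)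
  then obtain m where m: "coprime (J (i - i' + m) - J m) n" using J_sep by blast
  obtain k where k: "0 \<le> k" "k < n" "[t * k = m + i - a] (mod n)" using t_solve by blast
  have "[t * k + a - i = m + i - a + a - i] (mod n)" by (intro cong_diff cong_add cong_refl k(3))
  then have "[t * k + a - i = m] (mod n)" by simp
  then have "J (t * k + a - i) = J m" by (rule J_cong)
  moreover have "[t * k + a - i' = m + i - a + a - i'] (mod n)" by (intro cong_diff cong_add cong_refl k(3))
  then have "[t * k + a - i' = i - i' + m] (mod n)" by (simp add: algebra_simps)
  then have "J (t * k + a - i') = J (i - i' + m)" by (rule J_cong)
  ultimately show ?thesis using that k m by simp
qed

lemma rZ_irretractable: "irretractable X (rZ n t j)"
  unfolding irretractable_def sig_rZ
proof (intro ballI impI)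
  fix x y assume x: "x \<in> X" and y: "y \<in> X" and ne: "x \<noteq> y"
  obtain i a where xx: "x = (i, a)" by (cases x)
  obtain i' a' where yy: "y = (i', a')" by (cases y)
  show "\<exists>z\<in>X. \<sigma> x z \<noteq> \<sigma> y z"
  proof (cases "a = a'")
    case False
    then have "\<sigma> x (0, 0) \<noteq> \<sigma> y (0, 0)"
      using x y by (simp add: xx yy sigZ_eq mem_carrier)
    then show ?thesis using origin_in_carrier by blast
  next
    case True
    then have "i \<noteq> i'" using ne by (simp add: xx yy)
    then obtain k where k: "0 \<le> k" "k < n"
      and unit: "coprime (J (t * k + a - i') - J (t * k + a - i)) n"
      using exists_separating_column x y by (metis xx yy mem_carrier)
    have "\<sigma> x (k, 0) \<noteq> \<sigma> y (k, 0)"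
    proof
      assume "\<sigma> x (k, 0) = \<sigma> y (k, 0)"
      then have "[t * (0 - J (t * k + a - i)) = t * (0 - J (t * k + a - i'))] (mod n)"
        by (simp add: xx yy True sigZ_eq cong_def)
      then have "[0 - J (t * k + a - i) = 0 - J (t * k + a - i')] (mod n)" by (simp only: t_cancel)
      then have "[J (t * k + a - i) = J (t * k + a - i')] (mod n)" by (simp add: cong_minus_minus_iff)
      with unit show False using not_cong_of_coprime_diff by blast
    qed
    moreover have "(k, 0) \<in> X" using k by (simp add: mem_carrier)
    ultimately show ?thesis by blast
  qed
qed

subsection \<open>Simplicity\<close>

lemma unit_diff_not_cong:
  assumes "n \<noteq> 2" and "coprime (v - u) n"
  shows "\<not> [d - v + u = v - u + d] (mod n)"
proof
  assume "[d - v + u = v - u + d] (mod n)"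
  then have "n dvd (d - v + u) - (v - u + d)" by (simp only: cong_iff_dvd_diff)
  also have "(d - v + u) - (v - u + d) = - (2 * (v - u))" by (simp add: algebra_simps)
  finally have "n dvd 2 * (v - u)" by (simp only: dvd_minus_iff)
  moreover have "coprime n (v - u)" using assms(2) by (simp add: ac_simps)
  ultimately have "n dvd 2" using coprime_dvd_mult_left_iff[of n "v - u" 2] by blast
  then show False using assms(1) n_gt_1 zdvd_imp_le[of n 2] by simp
qed

context
  fixes Y :: "'b set" and s f
  assumes sol: "is_solution Y s" and hom: "is_hom X (rZ n t j) Y s f"
begin

lemma hom_sigZ: "x \<in> X \<Longrightarrow> y \<in> X \<Longrightarrow> f (\<sigma> x y) = sig s (f x) (f y)"
  by (rule hom_sig[OF sol hom, unfolded sig_rZ])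

lemma hom_sigZ_left: "x \<in> X \<Longrightarrow> x' \<in> X \<Longrightarrow> z \<in> X \<Longrightarrow> f x = f x' \<Longrightarrow> f (\<sigma> x z) = f (\<sigma> x' z)"
  by (simp add: hom_sigZ)

lemma hom_sigZ_right: "x \<in> X \<Longrightarrow> z \<in> X \<Longrightarrow> z' \<in> X \<Longrightarrow> f z = f z' \<Longrightarrow> f (\<sigma> x z) = f (\<sigma> x z')"
  by (simp add: hom_sigZ)

lemmas hom_eq_of_sigZ_eq = hom_eq_of_sig_eq[OF sol hom, unfolded sig_rZ]
lemmas hom_eq_transfer_sigZ = hom_eq_transfer[OF sol hom, unfolded sig_rZ]

lemma column_constant_of_row_pair:
  assumes ia: "(i, a) \<in> X" and i'a: "(i', a) \<in> X" and ne: "i \<noteq> i'" and fe: "f (i, a) = f (i', a)"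
  obtains k where "0 \<le> k" "k < n"
    "\<And>l l'. 0 \<le> l \<Longrightarrow> l < n \<Longrightarrow> 0 \<le> l' \<Longrightarrow> l' < n \<Longrightarrow> f (k, l) = f (k, l')"
proof -
  obtain k where k: "0 \<le> k" "k < n"
    and unit: "coprime (J (t * k + a - i') - J (t * k + a - i)) n"
    using exists_separating_column ia i'a ne by (metis mem_carrier)
  let ?c = "J (t * k + a - i') - J (t * k + a - i)"
  have step: "f (k, l) = f (k, (l + ?c) mod n)" if "0 \<le> l" "l < n" for l
  proof -
    have kl: "(k, l) \<in> X" using k that by (simp add: mem_carrier)
    have "f (k, l) = f (row_shift a i i' (k, l))"
      by (rule hom_eq_of_sigZ_eq[OF ia i'a kl row_shift_in[OF kl] fe sigZ_row_shift[symmetric]])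
    then show ?thesis by (simp add: row_shift_def algebra_simps)
  qed
  have "f (k, l) = f (k, l')" if l: "0 \<le> l" "l < n" and l': "0 \<le> l'" "l' < n" for l l'
  proof (rule mod_unit_step_induct[OF unit n_pos, where P = "\<lambda>l'. f (k, l) = f (k, l')"
        and l = l, OF refl l _ l'])
    fix l0 assume "0 \<le> l0" "l0 < n" "f (k, l) = f (k, l0)"
    then show "f (k, l) = f (k, (l0 + ?c) mod n)" using step[of l0] by simp
  qed
  with k show ?thesis using that by blast
qed

lemma all_columns_constant:
  assumes col: "\<And>l l'. 0 \<le> l \<Longrightarrow> l < n \<Longrightarrow> 0 \<le> l' \<Longrightarrow> l' < n \<Longrightarrow> f (k0, l) = f (k0, l')"
    and k0: "0 \<le> k0" "k0 < n" and kl: "(k, l) \<in> X" and kl': "(k, l') \<in> X"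
  shows "f (k, l) = f (k, l')"
proof -
  let ?b = "(k - t * k0) mod n"
  obtain m where m: "0 \<le> m" "m < n" "\<sigma> (0, ?b) (k0, m) = (k, l)"
    using sigZ_column_onto[OF kl] by blast
  obtain m' where m': "0 \<le> m'" "m' < n" "\<sigma> (0, ?b) (k0, m') = (k, l')"
    using sigZ_column_onto[OF kl'] by blast
  have "f (\<sigma> (0, ?b) (k0, m)) = f (\<sigma> (0, ?b) (k0, m'))"
    using col[OF m(1,2) m'(1,2)] m m' k0
    by (intro hom_sigZ_right) (simp_all add: mem_carrier n_pos)
  then show ?thesis using m m' by simp
qed

lemma adjacent_columns_of_constant_columns:
  assumes cols: "\<And>k l l'. (k, l) \<in> X \<Longrightarrow> (k, l') \<in> X \<Longrightarrow> f (k, l) = f (k, l')"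
    and m: "0 \<le> m" "m < n"
  shows "f (m, 0) = f ((m + 1) mod n, 0)"
proof -
  have "(0, 1) \<in> X" using n_gt_1 by (simp add: mem_carrier)
  then have f01: "f (0, 0) = f (0, 1)" using cols origin_in_carrier by blast
  obtain k where k: "0 \<le> k" "k < n" "[t * k = m] (mod n)" using t_solve by blast
  have kX: "(k, 0) \<in> X" using k n_pos by (simp add: mem_carrier)
  obtain u v where uv: "\<sigma> (0, 0) (k, 0) = (u, v)" by (cases "\<sigma> (0, 0) (k, 0)")
  obtain u' v' where uv': "\<sigma> (0, 1) (k, 0) = (u', v')" by (cases "\<sigma> (0, 1) (k, 0)")
  have "f (u, v) = f (u', v')"
    using hom_sigZ_left[OF origin_in_carrier \<open>(0, 1) \<in> X\<close> kX f01] by (simp add: uv uv')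
  moreover have "u = m" using uv k m by (simp add: sigZ_eq cong_def)
  moreover have "u' = (m + 1) mod n"
  proof -
    have "[t * k + 1 = m + 1] (mod n)" by (intro cong_add k(3) cong_refl)
    then show ?thesis using uv' by (simp add: sigZ_eq cong_def)
  qed
  moreover have "(u, v) \<in> X" "(u', v') \<in> X" using sigZ_in uv uv' by metis+
  moreover have "(m, 0) \<in> X" "((m + 1) mod n, 0) \<in> X" using m n_pos by (simp_all add: mem_carrier)
  ultimately show ?thesis using cols by metis
qed

lemma constant_of_constant_columns:
  assumes cols: "\<And>k l l'. (k, l) \<in> X \<Longrightarrow> (k, l') \<in> X \<Longrightarrow> f (k, l) = f (k, l')"
  shows "\<forall>z\<in>X. f z = f (0, 0)"
proof
  fix z assume z: "z \<in> X"
  obtain k l where zz: "z = (k, l)" by (cases z)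
  have rows: "f (m, 0) = f (0, 0)" if "0 \<le> m" "m < n" for m
  proof (rule mod_unit_step_induct[where c = 1 and l = 0 and P = "\<lambda>m. f (m, 0) = f (0, 0)",
        OF _ n_pos refl _ _ _ that])
    show "coprime 1 n" "0 \<le> (0 :: int)" "0 < n" by (simp_all add: n_pos)
    fix m0 assume "0 \<le> m0" "m0 < n" "f (m0, 0) = f (0, 0)"
    with adjacent_columns_of_constant_columns[OF cols, of m0]
    show "f ((m0 + 1) mod n, 0) = f (0, 0)" by simp
  qed
  have "(k, 0) \<in> X" using z n_pos by (simp add: zz mem_carrier)
  then have "f (k, l) = f (k, 0)" using z unfolding zz by (rule cols[rotated])
  also have "\<dots> = f (0, 0)" using z by (intro rows) (simp_all add: zz mem_carrier)
  finally show "f z = f (0, 0)" by (simp add: zz)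
qed

lemma constant_of_row_pair:
  assumes "(i, a) \<in> X" "(i', a) \<in> X" "i \<noteq> i'" "f (i, a) = f (i', a)"
  shows "\<forall>z\<in>X. f z = f (0, 0)"
proof -
  obtain k0 where k0: "0 \<le> k0" "k0 < n"
    and col: "\<And>l l'. 0 \<le> l \<Longrightarrow> l < n \<Longrightarrow> 0 \<le> l' \<Longrightarrow> l' < n \<Longrightarrow> f (k0, l) = f (k0, l')"
    using column_constant_of_row_pair[OF assms] by blast
  show ?thesis
    by (rule constant_of_constant_columns) (rule all_columns_constant[OF col k0]; assumption)
qed

lemma constant_of_column_pair:
  assumes kl: "(k, l) \<in> X" and kl': "(k, l') \<in> X" and ne: "l \<noteq> l'" and fe: "f (k, l) = f (k, l')"
  shows "\<forall>z\<in>X. f z = f (0, 0)"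
proof -
  obtain z1 where z1: "0 \<le> z1" "z1 < n" "[t * z1 = l' - l] (mod n)" using t_solve by blast
  have "[t * z1 + l = (l' - l) + l] (mod n)" by (intro cong_add z1(3) cong_refl)
  then have shifted: "[t * z1 + l = l'] (mod n)" by simp
  then have "[t * z1 + l - k = l' - k] (mod n)" by (intro cong_diff cong_refl)
  then have "J (t * z1 + l - k) = J (l' - k)" by (rule J_cong)
  then have "\<sigma> (k, l) (z1, 0) = \<sigma> (k, l') (0, 0)"
    using shifted kl' by (simp add: sigZ_eq cong_def mem_carrier)
  moreover have z1X: "(z1, 0) \<in> X" using z1 n_pos by (simp add: mem_carrier)
  ultimately have fz: "f (z1, 0) = f (0, 0)"
    using hom_eq_of_sigZ_eq[OF kl kl' _ origin_in_carrier fe] by blast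
  have "z1 \<noteq> 0"
  proof
    assume "z1 = 0"
    with shifted have "[l = l'] (mod n)" by simp
    then show False using ne kl kl' eq_of_cong by (simp add: mem_carrier)
  qed
  then show ?thesis using constant_of_row_pair[OF z1X origin_in_carrier _ fz] by blast
qed

lemma constant_of_diagonal_pair:
  assumes x: "(i, a) \<in> X" and x': "(i', a') \<in> X" and aa: "a \<noteq> a'"
    and diag: "[a - i = a' - i'] (mod n)" and fe: "f (i, a) = f (i', a')"
  shows "\<forall>z\<in>X. f z = f (0, 0)"
proof -
  have "J (a - i) = J (a' - i')" by (rule J_cong[OF diag])
  moreover have "f (\<sigma> (i, a) (0, 0)) = f (\<sigma> (i', a') (0, 0))"
    by (rule hom_sigZ_left[OF x x' origin_in_carrier fe])
  ultimately have "f (a, (t * (0 - J (a' - i'))) mod n) = f (a', (t * (0 - J (a' - i'))) mod n)"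
    using x x' by (simp add: sigZ_eq mem_carrier)
  moreover have "(a, (t * (0 - J (a' - i'))) mod n) \<in> X" "(a', (t * (0 - J (a' - i'))) mod n) \<in> X"
    using x x' by (simp_all add: mem_carrier)
  ultimately show ?thesis using constant_of_row_pair[OF _ _ aa] by blast
qed

lemma constant_of_skew_pair:
  assumes unit_diff: "\<And>x. x mod n \<noteq> 0 \<Longrightarrow> coprime (J 0 - J x) n" and n2: "n \<noteq> 2"
    and x: "(i, a) \<in> X" and x': "(i', a') \<in> X" and aa: "a \<noteq> a'" and fe: "f (i, a) = f (i', a')"
  shows "\<forall>z\<in>X. f z = f (0, 0)"
proof -
  obtain \<delta> where d: "0 \<le> \<delta>" "\<delta> < n" "[t * \<delta> = a - a'] (mod n)" using t_solve by blast
  define p where "p = (a - a') mod n"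
  define shift where "shift z = (case row_shift a i i' z of (k, l) \<Rightarrow> ((k + \<delta>) mod n, l))" for z
  define lift where "lift = row_shift 0 p 0"
  \<comment> \<open>Both maps preserve identifications under f; the images of (0,0) under their two
    composites lie in the column of \<delta> at heights differing by 2 (J (a - a') - J 0).\<close>
  have pX: "(p, 0) \<in> X" by (simp add: p_def mem_carrier n_pos)
  have shift_in: "shift z \<in> X" if "z \<in> X" for z
    using row_shift_in[OF that, of a i i'] by (auto simp: shift_def mem_carrier split: prod.split)
  have f_shift: "f z = f (shift z)" if "z \<in> X" for z
  proof -
    have "\<sigma> (i', a') (shift z) = \<sigma> (i, a) z"
      using sigZ_translate[OF d(3)] sigZ_row_shift[of i' a i z]
      by (auto simp: shift_def split: prod.split)
    from this[symmetric] show ?thesis by (rule hom_eq_of_sigZ_eq[OF x x' that shift_in[OF that] fe])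
  qed
  have f_lift: "f (lift z) = f (lift w)" if "z \<in> X" "w \<in> X" "f z = f w" for z w
    unfolding lift_def
    by (rule hom_eq_transfer_sigZ[OF pX origin_in_carrier that(1,2) row_shift_in[OF that(1)]
          row_shift_in[OF that(2)] sigZ_row_shift[symmetric] sigZ_row_shift[symmetric] that(3)])
  have "f (lift (0, 0)) = f (lift (shift (0, 0)))"
    by (rule f_lift[OF origin_in_carrier shift_in f_shift]) simp_all
  moreover have "f (lift (0, 0)) = f (shift (lift (0, 0)))"
    by (rule f_shift) (simp add: lift_def row_shift_in)
  ultimately have comm: "f (lift (shift (0, 0))) = f (shift (lift (0, 0)))" by simp
  define A where "A = ((J (a - i') - J (a - i)) mod n - J (t * \<delta> - p) + J (t * \<delta>)) mod n"
  define B where "B = ((J 0 - J (- p)) mod n - J (a - i) + J (a - i')) mod n"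
  have "lift (shift (0, 0)) = (\<delta>, A)" and "shift (lift (0, 0)) = (\<delta>, B)"
    using d by (simp_all add: A_def B_def shift_def lift_def row_shift_def)
  with comm have "f (\<delta>, A) = f (\<delta>, B)" by simp
  moreover have "(\<delta>, A) \<in> X" "(\<delta>, B) \<in> X" using d by (simp_all add: A_def B_def mem_carrier)
  moreover have "\<not> [A = B] (mod n)"
  proof -
    define D where "D = J (a - i') - J (a - i)"
    have "J (t * \<delta> - p) = J 0"
      by (rule J_cong) (use cong_diff[OF d(3) cong_mod_self[of "a - a'"]] in \<open>simp add: p_def\<close>)
    moreover have "J (t * \<delta>) = J (a - a')" by (rule J_cong[OF d(3)])
    ultimately have "[A = D - J 0 + J (a - a')] (mod n)"
      unfolding A_def D_def by (intro cong_trans[OF cong_mod_self] cong_arith_intros) simp_all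
    moreover have "[B = J 0 - J (a - a') + D] (mod n)"
    proof -
      have "J (- p) = J (- (a - a'))" by (rule J_cong) (simp add: p_def cong_def mod_simps)
      then have "[J (- p) = J (a - a')] (mod n)" using J_uminus[of "a - a'"] by simp
      then have "[B = J 0 - J (a - a') - J (a - i) + J (a - i')] (mod n)"
        unfolding B_def by (intro cong_trans[OF cong_mod_self] cong_add cong_diff cong_refl)
      then show ?thesis by (simp add: D_def algebra_simps)
    qed
    moreover have "\<not> [a = a'] (mod n)"
    proof
      assume "[a = a'] (mod n)"
      then have "a = a'" using x x' by (intro eq_of_cong) (simp_all add: mem_carrier)
      with aa show False ..
    qed
    then have "coprime (J 0 - J (a - a')) n"
      by (intro unit_diff) (simp add: cong_iff_dvd_diff dvd_eq_mod_eq_0)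
    ultimately show ?thesis using unit_diff_not_cong[OF n2] by (metis cong_sym cong_trans)
  qed
  then have "A \<noteq> B" by auto
  ultimately show ?thesis by (intro constant_of_column_pair)
qed

lemma constant_of_identification:
  assumes unit_diff: "\<And>x. x mod n \<noteq> 0 \<Longrightarrow> coprime (J 0 - J x) n"
    and x: "x \<in> X" and x': "x' \<in> X" and ne: "x \<noteq> x'" and fe: "f x = f x'"
  shows "\<forall>z\<in>X. f z = f (0, 0)"
proof -
  obtain i a where xx: "x = (i, a)" by (cases x)
  obtain i' a' where xx': "x' = (i', a')" by (cases x')
  have ia: "(i, a) \<in> X" and ia': "(i', a') \<in> X" using x x' by (simp_all add: xx xx')
  have fe': "f (i, a) = f (i', a')" using fe by (simp add: xx xx')
  show ?thesis
  proof (cases "a = a'")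
    case True
    then have "(i', a) \<in> X" "i \<noteq> i'" "f (i, a) = f (i', a)"
      using ia' ne fe' by (simp_all add: xx xx')
    then show ?thesis by (rule constant_of_row_pair[OF ia])
  next
    case aa: False
    show ?thesis
    proof (cases "i = i'")
      case True
      then have "(i, a') \<in> X" "f (i, a) = f (i, a')" using ia' fe' by simp_all
      then show ?thesis by (rule constant_of_column_pair[OF ia _ aa])
    next
      case ii: False
      show ?thesis
      proof (cases "[a - i = a' - i'] (mod n)")
        case True
        then show ?thesis by (rule constant_of_diagonal_pair[OF ia ia' aa _ fe'])
      next
        case False
        have n2: "n \<noteq> 2"
        proof
          assume two: "n = 2"
          have "0 \<le> i" "i < 2" "0 \<le> a" "a < 2" "0 \<le> i'" "i' < 2" "0 \<le> a'" "a' < 2"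
            using ia ia' two by (simp_all add: carrierZ2_def)
          then have "(2::int) dvd (a - i - (a' - i'))" using aa ii by presburger
          then show False using False two by (simp add: cong_iff_dvd_diff)
        qed
        show ?thesis by (rule constant_of_skew_pair[OF unit_diff n2 ia ia' aa fe'])
      qed
    qed
  qed
qed

end

lemma rZ_simple:
  assumes unit_diff: "\<And>x. x mod n \<noteq> 0 \<Longrightarrow> coprime (J 0 - J x) n"
  shows "is_simple X (rZ n t j) TYPE('b)"
proof (rule is_simpleI)
  have "card X = nat n * nat n" by (simp add: carrierZ2_def card_cartesian_product)
  moreover have "nat n * nat n \<ge> 2 * 2" using n_gt_1 by (intro mult_mono) simp_all
  ultimately show "card X > 1" by simp
next
  fix Y :: "'b set" and s f x x'
  assume sol: "is_solution Y s" and hom: "is_hom X (rZ n t j) Y s f"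
    and x: "x \<in> X" and x': "x' \<in> X" "x \<noteq> x'" "f x = f x'"
  have const: "\<forall>z\<in>X. f z = f (0, 0)"
    using constant_of_identification[OF sol hom unit_diff x x'] .
  show "\<forall>z\<in>X. \<forall>z'\<in>X. f z = f z'"
  proof (intro ballI)
    fix z z' assume "z \<in> X" "z' \<in> X"
    then show "f z = f z'" using const by (metis (no_types))
  qed
qed

end

theorem mainTheorem5:
  fixes n t :: int and j :: "int \<Rightarrow> int"
  assumes n: "n > 1"
    and t_unit: "coprime t n"
    and j_sym: "\<forall>i. [j ((- i) mod n) = j (i mod n)] (mod n)"
    and j_pow: "\<forall>i s. [j ((zpow_mod n t s * i) mod n)
                      = zpow_mod n t s * j (i mod n) - (zpow_mod n t s - 1) * j 0] (mod n)"
    and j_sep: "\<forall>i. i mod n \<noteq> 0 \<longrightarrow>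
                   (\<exists>k. coprime (j ((i + k) mod n) - j (k mod n)) n)"
  shows "is_solution (carrierZ2 n) (rZ n t j)
       \<and> indecomposable (carrierZ2 n) (rZ n t j)
       \<and> irretractable (carrierZ2 n) (rZ n t j)
       \<and> ((\<forall>i. i mod n \<noteq> 0 \<longrightarrow> coprime (j 0 - j (i mod n)) n)
          \<and> (\<forall>i k. \<not> [j (i mod n) = j (k mod n)] (mod n)
                      \<longrightarrow> coprime (j (i mod n) - j (k mod n)) n)
          \<longrightarrow> is_simple (carrierZ2 n) (rZ n t j) TYPE('b))"
proof -
  have "zpow_mod n t 1 = t" by (simp add: zpow_mod_def)
  then interpret zn_solution n t j
    using n t_unit j_sym j_pow j_sep by unfold_locales metis+
  have "is_simple (carrierZ2 n) (rZ n t j) TYPE('b)"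
    if "\<forall>i. i mod n \<noteq> 0 \<longrightarrow> coprime (j 0 - j (i mod n)) n"
    using that by (intro rZ_simple) (simp add: J_def)
  then show ?thesis using rZ_is_solution rZ_indecomposable rZ_irretractable by blast
qed

end
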